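(* Suppose every IDR of the system $\mathcal{I}(E,\mathcal{F}(E))$ is of Restricted Case I form. Then the optimization version of the Entity Hardening problem — given $E'\subseteq E$ with $|E'|=K$ and an integer $k<K$, find $H\subseteq E$ with $|H|\le k$ maximizing the number $|\mathrm{KillSet}(E')\setminus F(E',H)|$ of protected entities — can be solved optimally in time polynomial in $n=|E|$.
   Context: A system $\mathcal{I}(E,\mathcal{F}(E))$ consists of a finite set $E$ of entities, $n=|E|$, and a set $\mathcal{F}(E)$ of interdependency relations (IDRs). Each entity $e$ has at most one IDR, of the form $e\leftarrow \sum_{i=1}^{m}\prod_{x\in s_i}x$ (a disjunction of conjunctions), where each minterm $s_i$ is a nonempty subset of $E$; it means $e$ is operational only if for at least one minterm all entities of that minterm are operational. Entities without an IDR can only fail initially. Failure dynamics: given an initially failing set $E'\subseteq E$ and a set $H\subseteq E$ of hardened entities (hardened entities never fail), put $F_0=E'\setminus H$ and $F_{t+1}=F_t\cup\{e\in E\setminus H: e \text{ has an IDR and every minterm of it contains an element of } F_t\}$; the final failed set is $F(E',H):=F_{n-1}$. $\mathrm{KillSet}(E'):=F(E',\emptyset)$. Restricted Case I: every IDR consists of a single minterm of size one, i.e. has the form $e_i\leftarrow e_j$ with $e_j\in E$. *)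

theory Defs
  imports Main
begin

text \<open>An IDR of entity e is an optional set of minterms (each minterm a set of
entities); None means e has no IDR.  The IDR Some M stands for
e <- sum over s in M of prod over x in s of x.\<close>

type_synonym 'a idrs = "'a \<Rightarrow> 'a set set option"

fun fail_iter :: "'a set \<Rightarrow> 'a idrs \<Rightarrow> 'a set \<Rightarrow> 'a set \<Rightarrow> nat \<Rightarrow> 'a set" where
  "fail_iter E idr E' H 0 = E' - H"
| "fail_iter E idr E' H (Suc t) =
     fail_iter E idr E' H t \<union>
     {e \<in> E - H. idr e \<noteq> None \<and> (\<forall>s \<in> the (idr e). s \<inter> fail_iter E idr E' H t \<noteq> {})}"

definition failset :: "'a set \<Rightarrow> 'a idrs \<Rightarrow> 'a set \<Rightarrow> 'a set \<Rightarrow> 'a set" where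
  "failset E idr E' H = fail_iter E idr E' H (card E - 1)"

definition KillSet :: "'a set \<Rightarrow> 'a idrs \<Rightarrow> 'a set \<Rightarrow> 'a set" where
  "KillSet E idr E' = failset E idr E' {}"

definition protected_count :: "'a set \<Rightarrow> 'a idrs \<Rightarrow> 'a set \<Rightarrow> 'a set \<Rightarrow> nat" where
  "protected_count E idr E' H = card (KillSet E idr E' - failset E idr E' H)"

definition wf_system :: "'a set \<Rightarrow> 'a idrs \<Rightarrow> bool" where
  "wf_system E idr \<longleftrightarrow> finite E \<and>
     (\<forall>e. idr e \<noteq> None \<longrightarrow> e \<in> E \<and> the (idr e) \<noteq> {} \<and> finite (the (idr e)) \<and>
          (\<forall>s \<in> the (idr e). s \<noteq> {} \<and> s \<subseteq> E))"

definition restricted_case_I :: "'a set \<Rightarrow> 'a idrs \<Rightarrow> bool" where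
  "restricted_case_I E idr \<longleftrightarrow>
     (\<forall>e \<in> E. idr e = None \<or> (\<exists>j \<in> E. idr e = Some {{j}}))"

definition optimal_hardening :: "'a set \<Rightarrow> 'a idrs \<Rightarrow> 'a set \<Rightarrow> nat \<Rightarrow> 'a set \<Rightarrow> bool" where
  "optimal_hardening E idr E' k H \<longleftrightarrow>
     H \<subseteq> E \<and> card H \<le> k \<and>
     (\<forall>H'. H' \<subseteq> E \<and> card H' \<le> k \<longrightarrow>
        protected_count E idr E' H' \<le> protected_count E idr E' H)"

section \<open>Machine model: unit-cost RAM with addition, truncated subtraction,
indirect addressing and conditional jumps (no multiplication), which is
polynomially equivalent to Turing machines.\<close>

datatype instr =
    Const nat nat
  | Add nat nat nat
  | Sub nat nat nat
  | Load nat nat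
  | Store nat nat
  | Jz nat nat
  | Jmp nat

type_synonym config = "nat \<times> (nat \<Rightarrow> nat)"

fun exec :: "instr \<Rightarrow> config \<Rightarrow> config" where
  "exec (Const r c) (pc, m) = (Suc pc, m(r := c))"
| "exec (Add r a b) (pc, m) = (Suc pc, m(r := m a + m b))"
| "exec (Sub r a b) (pc, m) = (Suc pc, m(r := m a - m b))"
| "exec (Load r a) (pc, m) = (Suc pc, m(r := m (m a)))"
| "exec (Store a r) (pc, m) = (Suc pc, m(m a := m r))"
| "exec (Jz r l) (pc, m) = (if m r = 0 then l else Suc pc, m)"
| "exec (Jmp l) (pc, m) = (l, m)"

definition step :: "instr list \<Rightarrow> config \<Rightarrow> config" where
  "step prog c = (if fst c < length prog then exec (prog ! fst c) c else c)"

definition run :: "instr list \<Rightarrow> nat \<Rightarrow> (nat \<Rightarrow> nat) \<Rightarrow> config" where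
  "run prog t m = (step prog ^^ t) (0, m)"

definition halted :: "instr list \<Rightarrow> config \<Rightarrow> bool" where
  "halted prog c \<longleftrightarrow> length prog \<le> fst c"

text \<open>Input encoding of a Restricted Case I instance with E = {0..<n}:
 cell 0 = n, cell 1 = k, cell 2+i = j+1 if e_i <- e_j and 0 if e_i has no IDR,
 cell 2+n+i = 1 if i in E' and 0 otherwise; every other cell is 0.
 Output convention: H = {i < n. cell (2+2n+i) is nonzero} after halting.\<close>
definition encode_input :: "nat \<Rightarrow> nat idrs \<Rightarrow> nat set \<Rightarrow> nat \<Rightarrow> (nat \<Rightarrow> nat)" where
  "encode_input n idr E' k = (\<lambda>a.
     if a = 0 then n
     else if a = 1 then k
     else if 2 \<le> a \<and> a < 2 + n then
       (let i = a - 2 in if \<exists>j. idr i = Some {{j}} then Suc (THE j. idr i = Some {{j}}) else 0)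
     else if 2 + n \<le> a \<and> a < 2 + 2 * n then (if a - (2 + n) \<in> E' then 1 else 0)
     else 0)"

definition decode_output :: "nat \<Rightarrow> (nat \<Rightarrow> nat) \<Rightarrow> nat set" where
  "decode_output n m = {i. i < n \<and> m (2 + 2 * n + i) \<noteq> 0}"

end

theory Submission
  imports Defs
begin

text \<open>In Restricted Case I every entity depends on at most one other entity, so an entity
  killed by the initial failures E' is killed through a unique chain of dependencies starting at
  an entity of E', its root. Hardening a root protects its whole tree, trees of distinct roots
  are disjoint, and hardening any other entity protects no more than hardening its root would.
  Hence the k roots with the largest trees form an optimal hardening set. A RAM program with
  addition as its only arithmetic finds them in O(n^2) steps: it follows the dependency chain of
  every entity for at most n steps to count the tree sizes, and then picks a heaviest remaining
  root k times.\<close>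

section \<open>Failure cascades\<close>

lemma card_strict_chain:
  assumes "\<And>s. finite (F s)" and "\<And>s. s < m \<Longrightarrow> F s \<subset> F (Suc s)"
  shows "card (F 0) + m \<le> card (F m)"
  using assms(2)
proof (induction m)
  case (Suc m)
  have "card (F 0) + m \<le> card (F m)"
    using Suc.IH Suc.prems less_SucI by blast
  moreover have "card (F m) < card (F (Suc m))"
    using Suc.prems[of m] assms(1)[of "Suc m"] psubset_card_mono by blast
  ultimately show ?case by simp
qed simp

lemma fail_iter_mono:
  "t \<le> t' \<Longrightarrow> fail_iter E idr E' H t \<subseteq> fail_iter E idr E' H t'"
  by (induction t' rule: dec_induct) auto

lemma fail_iter_stable:
  assumes "fail_iter E idr E' H (Suc s) = fail_iter E idr E' H s" and "s \<le> t"
  shows "fail_iter E idr E' H t = fail_iter E idr E' H s"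
  using assms(2)
proof (induction t rule: dec_induct)
  case (step t)
  then have "fail_iter E idr E' H (Suc t) = fail_iter E idr E' H (Suc s)"
    by (simp only: fail_iter.simps)
  then show ?case
    using assms(1) by simp
qed simp

lemma fail_iter_subset: "E' \<subseteq> E \<Longrightarrow> fail_iter E idr E' H t \<subseteq> E"
  by (induction t) auto

lemma fail_iter_empty:
  assumes "wf_system E idr" and "fail_iter E idr E' H 0 = {}"
  shows "fail_iter E idr E' H t = {}"
proof -
  have "fail_iter E idr E' H (Suc 0) = {}"
    using assms(1) unfolding fail_iter.simps(2) assms(2) wf_system_def by auto
  then show ?thesis
    using fail_iter_stable[of E idr E' H 0 t] assms(2) by (simp only:)
qed

text \<open>The cascade stabilises within card E - 1 rounds: otherwise the rounds
  0, ..., card E would form a strictly increasing chain of nonempty subsets of E.\<close>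
lemma fail_iter_stabilises:
  assumes "wf_system E idr" and "E' \<subseteq> E"
  obtains s where "s \<le> card E - 1" and "fail_iter E idr E' H (Suc s) = fail_iter E idr E' H s"
proof (cases "fail_iter E idr E' H 0 = {}")
  case True
  then have "fail_iter E idr E' H (Suc 0) = fail_iter E idr E' H 0"
    using fail_iter_empty[OF assms(1)] by blast
  then show ?thesis
    using that[of 0] by simp
next
  case False
  let ?F = "fail_iter E idr E' H"
  have "finite E"
    using assms(1) unfolding wf_system_def by simp
  then have fin: "finite (?F s)" for s
    using fail_iter_subset[OF assms(2)] by (rule finite_subset[rotated])
  have "\<exists>s < card E. ?F (Suc s) = ?F s"
  proof (rule ccontr)
    assume "\<not> ?thesis"
    then have "?F s \<subset> ?F (Suc s)" if "s < card E" for s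
      using that fail_iter_mono[of s "Suc s"] by auto
    then have "card (?F 0) + card E \<le> card (?F (card E))"
      by (rule card_strict_chain[OF fin])
    moreover have "card (?F (card E)) \<le> card E"
      by (rule card_mono[OF \<open>finite E\<close> fail_iter_subset[OF assms(2)]])
    moreover have "card (?F 0) > 0"
      using False fin[of 0] card_gt_0_iff by blast
    ultimately show False by linarith
  qed
  then obtain s where "s < card E" "?F (Suc s) = ?F s" by blast
  then show ?thesis
    using that[of s] by simp
qed

lemma failset_eq_UN_fail_iter:
  assumes "wf_system E idr" and "E' \<subseteq> E"
  shows "failset E idr E' H = (\<Union>t. fail_iter E idr E' H t)"
proof -
  obtain s where s: "s \<le> card E - 1" "fail_iter E idr E' H (Suc s) = fail_iter E idr E' H s"
    using fail_iter_stabilises[OF assms] .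
  have "fail_iter E idr E' H t \<subseteq> failset E idr E' H" for t
  proof (cases "t \<le> card E - 1")
    case True
    then show ?thesis
      unfolding failset_def by (rule fail_iter_mono)
  next
    case False
    then have "fail_iter E idr E' H t = fail_iter E idr E' H (card E - 1)"
      using fail_iter_stable[OF s(2)] s(1) by (metis nat_le_linear order_trans)
    then show ?thesis
      unfolding failset_def by (rule equalityD1)
  qed
  then show ?thesis
    unfolding failset_def by (intro equalityI UN_least UN_upper) auto
qed

section \<open>Restricted Case I\<close>

lemma sum_le_sum_of_dominating:
  fixes f :: "'a \<Rightarrow> nat"
  assumes "finite A" and "finite T" and "card A \<le> card T"
    and dominates: "\<And>a b. a \<in> T \<Longrightarrow> b \<in> A - T \<Longrightarrow> f b \<le> f a"
  shows "sum f A \<le> sum f T"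
proof (cases "A - T = {}")
  case True
  then have "A \<subseteq> T" by blast
  then show ?thesis
    using assms(2) by (intro sum_mono2) auto
next
  case False
  define c where "c = Max (f ` (A - T))"
  have c_in: "c \<in> f ` (A - T)"
    unfolding c_def using False assms(1) by simp
  have "card A = card (A \<inter> T) + card (A - T)" "card T = card (A \<inter> T) + card (T - A)"
    using card_Int_Diff[OF assms(1), of T] card_Int_Diff[OF assms(2), of A] by (auto simp: Int_commute)
  then have card_le: "card (A - T) \<le> card (T - A)"
    using assms(3) by linarith
  have "f b \<le> c" if "b \<in> A - T" for b
    unfolding c_def using that assms(1) by simp
  then have "sum f (A - T) \<le> card (A - T) * c"
    using sum_bounded_above[of "A - T" f c] by simp
  also have "\<dots> \<le> card (T - A) * c"
    using card_le by (rule mult_le_mono1)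
  also have "\<dots> \<le> sum f (T - A)"
    using c_in dominates by (intro sum_bounded_below[of "T - A" c f, simplified]) auto
  finally have "sum f (A - T) \<le> sum f (T - A)" .
  then show ?thesis
    using sum.Int_Diff[OF assms(1), of f T] sum.Int_Diff[OF assms(2), of f A]
    by (simp add: Int_commute)
qed

locale case_I_system =
  fixes E :: "'a set" and idr :: "'a idrs" and E' :: "'a set"
  assumes wf: "wf_system E idr" and case_I: "restricted_case_I E idr" and initial_subset: "E' \<subseteq> E"
begin

definition parent :: "'a \<Rightarrow> 'a option" where
  "parent x = (if \<exists>j. idr x = Some {{j}} then Some (THE j. idr x = Some {{j}}) else None)"

lemma finite_E: "finite E"
  using wf unfolding wf_system_def by simp

lemma idr_cases: "idr x = None \<or> (\<exists>j \<in> E. idr x = Some {{j}})"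
  using wf case_I unfolding wf_system_def restricted_case_I_def by blast

lemma parent_eq_Some_iff: "parent x = Some j \<longleftrightarrow> idr x = Some {{j}}"
  unfolding parent_def by auto

lemma parent_in_E: "parent x = Some j \<Longrightarrow> x \<in> E \<and> j \<in> E"
  using idr_cases[of x] wf unfolding parent_eq_Some_iff wf_system_def by force

inductive fails :: "'a set \<Rightarrow> 'a \<Rightarrow> bool" for H where
  fails_initial: "x \<in> E' \<Longrightarrow> x \<notin> H \<Longrightarrow> fails H x"
| fails_parent: "parent x = Some j \<Longrightarrow> x \<notin> H \<Longrightarrow> fails H j \<Longrightarrow> fails H x"

lemma fail_iter_imp_fails: "x \<in> fail_iter E idr E' H t \<Longrightarrow> fails H x"
proof (induction t arbitrary: x)
  case 0
  then show ?case by (simp add: fails_initial)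
next
  case (Suc t)
  show ?case
  proof (cases "x \<in> fail_iter E idr E' H t")
    case False
    with Suc.prems obtain j where "idr x = Some {{j}}" "x \<notin> H" "j \<in> fail_iter E idr E' H t"
      using idr_cases[of x] by auto
    then show ?thesis
      using Suc.IH by (auto simp flip: parent_eq_Some_iff intro: fails_parent)
  qed (rule Suc.IH)
qed

lemma fails_imp_fail_iter: "fails H x \<Longrightarrow> \<exists>t. x \<in> fail_iter E idr E' H t"
proof (induction rule: fails.induct)
  case (fails_initial x)
  then have "x \<in> fail_iter E idr E' H 0" by simp
  then show ?case ..
next
  case (fails_parent x j)
  then obtain t where "j \<in> fail_iter E idr E' H t" by blast
  then have "x \<in> fail_iter E idr E' H (Suc t)"
    using fails_parent.hyps parent_in_E[of x j] by (simp add: parent_eq_Some_iff)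
  then show ?case ..
qed

lemma failset_eq: "failset E idr E' H = {x. fails H x}"
  unfolding failset_eq_UN_fail_iter[OF wf initial_subset]
  using fail_iter_imp_fails fails_imp_fail_iter by auto

lemma fails_not_hardened: "fails H x \<Longrightarrow> x \<notin> H"
  by (cases rule: fails.cases) auto

lemma fails_initial_iff: "x \<in> E' \<Longrightarrow> fails H x \<longleftrightarrow> x \<notin> H"
  using fails_initial fails_not_hardened by blast

lemma fails_parent_iff:
  assumes "x \<notin> E'" and "parent x = Some j" and "x \<notin> H"
  shows "fails H x \<longleftrightarrow> fails H j"
proof
  assume "fails H x"
  then show "fails H j"
    by (cases rule: fails.cases) (use assms in auto)
qed (rule fails_parent[OF assms(2,3)])

inductive root_of :: "'a \<Rightarrow> 'a \<Rightarrow> bool" where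
  root_self: "x \<in> E' \<Longrightarrow> root_of x x"
| root_parent: "x \<notin> E' \<Longrightarrow> parent x = Some j \<Longrightarrow> root_of j r \<Longrightarrow> root_of x r"

lemma root_of_unique: "root_of x r \<Longrightarrow> root_of x r' \<Longrightarrow> r = r'"
proof (induction arbitrary: r' rule: root_of.induct)
  case (root_self x)
  from root_self.prems show ?case
    by (cases rule: root_of.cases) (use root_self.hyps in auto)
next
  case (root_parent x j r)
  from root_parent.prems obtain j' where "parent x = Some j'" "root_of j' r'"
    by (cases rule: root_of.cases) (use root_parent.hyps(1) in auto)
  then show ?case
    using root_parent.hyps(2) root_parent.IH by simp
qed

lemma root_of_in_initial: "root_of x r \<Longrightarrow> r \<in> E'"
  by (induction rule: root_of.induct) auto

lemma root_of_in_E: "root_of x r \<Longrightarrow> x \<in> E"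
  by (cases rule: root_of.cases) (use initial_subset parent_in_E in auto)

lemma killed_iff_has_root: "fails {} x \<longleftrightarrow> (\<exists>r. root_of x r)"
proof
  assume "fails {} x"
  then show "\<exists>r. root_of x r"
    by (induction rule: fails.induct) (auto intro: root_of.intros)
next
  assume "\<exists>r. root_of x r"
  then obtain r where "root_of x r" ..
  then show "fails {} x"
    by (induction rule: root_of.induct) (auto intro: fails.intros)
qed

lemma fails_iff_root_not_hardened:
  assumes "H \<subseteq> E'" and "root_of x r"
  shows "fails H x \<longleftrightarrow> r \<notin> H"
  using assms(2)
proof (induction rule: root_of.induct)
  case (root_self x)
  then show ?case by (rule fails_initial_iff)
next
  case (root_parent x j r)
  then show ?case
    using fails_parent_iff assms(1) by blast
qed

lemma survivor_has_hardened_relative: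
  "root_of x r \<Longrightarrow> \<not> fails H x \<Longrightarrow> \<exists>h \<in> H. root_of h r"
proof (induction rule: root_of.induct)
  case (root_self x)
  then show ?case
    using fails_initial_iff root_of.root_self by blast
next
  case (root_parent x j r)
  then show ?case
    using fails_parent_iff root_of.root_parent by blast
qed

fun root_within :: "nat \<Rightarrow> 'a \<Rightarrow> 'a option" where
  "root_within 0 x = (if x \<in> E' then Some x else None)"
| "root_within (Suc f) x =
     (if x \<in> E' then Some x else case parent x of None \<Rightarrow> None | Some j \<Rightarrow> root_within f j)"

lemma root_within_imp_root_of: "root_within f x = Some r \<Longrightarrow> root_of x r"
proof (induction f arbitrary: x)
  case 0
  then show ?case by (auto split: if_splits intro: root_self)
next
  case (Suc f)
  then show ?case by (auto split: if_splits option.splits intro: root_of.intros)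
qed

lemma root_within_mono: "root_within f x = Some r \<Longrightarrow> f \<le> g \<Longrightarrow> root_within g x = Some r"
proof (induction f arbitrary: x g)
  case 0
  then show ?case by (cases g) (auto split: if_splits)
next
  case (Suc f)
  then obtain g' where "g = Suc g'" "f \<le> g'"
    by (cases g) auto
  with Suc show ?case by (auto split: if_splits option.splits)
qed

lemma fail_iter_imp_root_within: "x \<in> fail_iter E idr E' {} t \<Longrightarrow> root_within t x \<noteq> None"
proof (induction t arbitrary: x)
  case (Suc t)
  show ?case
  proof (cases "x \<in> fail_iter E idr E' {} t")
    case True
    then show ?thesis
      using Suc.IH root_within_mono[of t x _ "Suc t"] by fastforce
  next
    case False
    with Suc.prems obtain j where "idr x = Some {{j}}" "j \<in> fail_iter E idr E' {} t"
      using idr_cases[of x] by auto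
    then show ?thesis
      using Suc.IH by (auto simp flip: parent_eq_Some_iff)
  qed
qed simp

text \<open>Fuel card E suffices because the cascade stabilises within card E - 1 rounds.\<close>
lemma root_of_iff_root_within: "root_of x r \<longleftrightarrow> root_within (card E) x = Some r"
proof
  assume r: "root_of x r"
  then have "x \<in> fail_iter E idr E' {} (card E - 1)"
    using killed_iff_has_root failset_eq unfolding failset_def by blast
  then obtain r' where "root_within (card E - 1) x = Some r'"
    using fail_iter_imp_root_within by blast
  then have "root_within (card E) x = Some r'"
    by (rule root_within_mono) simp
  moreover have "r' = r"
    using root_within_imp_root_of[OF \<open>root_within (card E) x = Some r'\<close>] r root_of_unique by blast
  ultimately show "root_within (card E) x = Some r"
    by simp
qed (rule root_within_imp_root_of)

definition root_tree :: "'a \<Rightarrow> 'a set" where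
  "root_tree r = {x. root_of x r}"

definition roots :: "'a set \<Rightarrow> 'a set" where
  "roots H = {r. \<exists>h \<in> H. root_of h r}"

lemma finite_root_tree: "finite (root_tree r)"
  using root_of_in_E unfolding root_tree_def by (intro finite_subset[OF _ finite_E]) auto

lemma KillSet_eq: "KillSet E idr E' = {x. \<exists>r. root_of x r}"
  unfolding KillSet_def failset_eq killed_iff_has_root ..

lemma card_roots_le: "finite H \<Longrightarrow> card (roots H) \<le> card H"
proof -
  assume "finite H"
  have "(THE r. root_of h r) = r" if "root_of h r" for h r
    using that root_of_unique by blast
  then have "roots H \<subseteq> (\<lambda>h. THE r. root_of h r) ` H"
    unfolding roots_def by force
  then have "card (roots H) \<le> card ((\<lambda>h. THE r. root_of h r) ` H)"
    using \<open>finite H\<close> by (intro card_mono) auto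
  also have "\<dots> \<le> card H"
    by (rule card_image_le[OF \<open>finite H\<close>])
  finally show ?thesis .
qed

lemma protected_set_eq:
  assumes "H \<subseteq> E'"
  shows "KillSet E idr E' - failset E idr E' H = (\<Union>r \<in> H. root_tree r)"
  unfolding KillSet_eq failset_eq root_tree_def
  using fails_iff_root_not_hardened[OF assms] root_of_in_initial assms by auto

lemma finite_initial_subset: "H \<subseteq> E' \<Longrightarrow> finite H"
  using initial_subset finite_E by (meson finite_subset)

lemma protected_count_eq_sum:
  assumes "H \<subseteq> E'"
  shows "protected_count E idr E' H = (\<Sum>r \<in> H. card (root_tree r))"
proof -
  have "root_tree r \<inter> root_tree r' = {}" if "r \<noteq> r'" for r r'
    using that root_of_unique unfolding root_tree_def by auto
  then have "card (\<Union>r \<in> H. root_tree r) = (\<Sum>r \<in> H. card (root_tree r))"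
    using finite_initial_subset[OF assms] finite_root_tree by (intro card_UN_disjoint) auto
  then show ?thesis
    unfolding protected_count_def protected_set_eq[OF assms] .
qed

lemma roots_subset: "roots H \<subseteq> E'"
  unfolding roots_def using root_of_in_initial by blast

text \<open>An entity survives only if its chain to its root meets H, and then hardening that root
  saves it as well.\<close>
lemma protected_count_le_roots:
  "protected_count E idr E' H \<le> protected_count E idr E' (roots H)"
proof -
  have "KillSet E idr E' - failset E idr E' H \<subseteq> KillSet E idr E' - failset E idr E' (roots H)"
  proof
    fix x
    assume x: "x \<in> KillSet E idr E' - failset E idr E' H"
    then obtain r where r: "root_of x r"
      unfolding KillSet_eq by blast
    have "\<not> fails H x"
      using x unfolding failset_eq by simp
    then obtain h where "h \<in> H" "root_of h r"
      using survivor_has_hardened_relative[OF r] by blast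
    then have "r \<in> roots H"
      unfolding roots_def by blast
    then have "\<not> fails (roots H) x"
      using fails_iff_root_not_hardened[OF roots_subset r] by simp
    then show "x \<in> KillSet E idr E' - failset E idr E' (roots H)"
      using x unfolding failset_eq by simp
  qed
  moreover have "finite (KillSet E idr E')"
    unfolding KillSet_eq using root_of_in_E by (intro finite_subset[OF _ finite_E]) auto
  ultimately show ?thesis
    unfolding protected_count_def by (intro card_mono) auto
qed

theorem heaviest_roots_optimal:
  assumes "T \<subseteq> E'" and "card T = k"
    and heaviest: "\<And>a b. a \<in> T \<Longrightarrow> b \<in> E' - T \<Longrightarrow> card (root_tree b) \<le> card (root_tree a)"
  shows "optimal_hardening E idr E' k T"
  unfolding optimal_hardening_def
proof (intro conjI allI impI)
  show "T \<subseteq> E" "card T \<le> k"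
    using assms initial_subset by auto
  fix H
  assume H: "H \<subseteq> E \<and> card H \<le> k"
  then have "finite H"
    using finite_subset finite_E by auto
  have fin: "finite (roots H)" "finite T"
    using roots_subset assms(1) by (simp_all add: finite_initial_subset)
  have "protected_count E idr E' H \<le> (\<Sum>r \<in> roots H. card (root_tree r))"
    using protected_count_le_roots protected_count_eq_sum[OF roots_subset] by simp
  also have "\<dots> \<le> (\<Sum>r \<in> T. card (root_tree r))"
  proof (rule sum_le_sum_of_dominating[OF fin])
    show "card (roots H) \<le> card T"
      using card_roots_le[OF \<open>finite H\<close>] H assms(2) by linarith
  qed (use heaviest roots_subset in blast)
  also have "\<dots> = protected_count E idr E' T"
    using protected_count_eq_sum[OF assms(1)] by simp
  finally show "protected_count E idr E' H \<le> protected_count E idr E' T" .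
qed

end

section \<open>Running programs\<close>

definition reaches :: "instr list \<Rightarrow> nat \<Rightarrow> (nat \<Rightarrow> nat) \<Rightarrow> nat \<Rightarrow> ((nat \<Rightarrow> nat) \<Rightarrow> bool) \<Rightarrow> nat \<Rightarrow> bool"
  where "reaches prog pc m pc' Q b \<longleftrightarrow>
    (\<exists>t \<le> b. fst ((step prog ^^ t) (pc, m)) = pc' \<and> Q (snd ((step prog ^^ t) (pc, m))))"

lemma funpow_numeral_apply: "(f ^^ numeral k) x = (f ^^ pred_numeral k) (f x)"
  by (subst numeral_eq_Suc) (simp only: funpow_Suc_right comp_apply)

lemma reaches_after:
  assumes "(step prog ^^ t) (pc, m) = (pc1, m1)" and "reaches prog pc1 m1 pc' Q b"
  shows "reaches prog pc m pc' Q (t + b)"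
proof -
  obtain s where "s \<le> b" "fst ((step prog ^^ s) (pc1, m1)) = pc' \<and> Q (snd ((step prog ^^ s) (pc1, m1)))"
    using assms(2) unfolding reaches_def by blast
  moreover have "(step prog ^^ s) (pc1, m1) = (step prog ^^ (s + t)) (pc, m)"
    by (simp add: funpow_add assms(1))
  ultimately show ?thesis
    unfolding reaches_def by (intro exI[of _ "s + t"]) auto
qed

lemma reaches_within:
  "(step prog ^^ t) (pc, m) = (pc', m') \<Longrightarrow> Q m' \<Longrightarrow> t \<le> b \<Longrightarrow> reaches prog pc m pc' Q b"
  unfolding reaches_def by (intro exI[of _ t]) simp

lemma reaches_mono:
  assumes "reaches prog pc m pc' Q b" and "b \<le> b'" and "\<And>m. Q m \<Longrightarrow> R m"
  shows "reaches prog pc m pc' R b'"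
proof -
  obtain t where "t \<le> b" "fst ((step prog ^^ t) (pc, m)) = pc'" "Q (snd ((step prog ^^ t) (pc, m)))"
    using assms(1) unfolding reaches_def by blast
  then show ?thesis
    unfolding reaches_def using assms(2,3) by (intro exI[of _ t]) simp
qed

lemma reaches_trans:
  assumes "reaches prog pc m pc1 Q b1" and "\<And>m1. Q m1 \<Longrightarrow> reaches prog pc1 m1 pc' R b2"
  shows "reaches prog pc m pc' R (b1 + b2)"
proof -
  obtain t where t: "t \<le> b1" "(step prog ^^ t) (pc, m) = (pc1, snd ((step prog ^^ t) (pc, m)))"
    "Q (snd ((step prog ^^ t) (pc, m)))"
    using assms(1) unfolding reaches_def by (metis prod.collapse)
  then have "reaches prog pc m pc' R (t + b2)"
    using assms(2) by (intro reaches_after[OF t(2)]) simp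
  then show ?thesis
    by (rule reaches_mono) (use t(1) in simp_all)
qed

lemma run_when_reaches_halt:
  assumes "reaches prog 0 m (length prog) Q b"
  shows "halted prog (run prog b m) \<and> Q (snd (run prog b m))"
proof -
  obtain t where t: "t \<le> b" "fst ((step prog ^^ t) (0, m)) = length prog"
    "Q (snd ((step prog ^^ t) (0, m)))"
    using assms unfolding reaches_def by blast
  have fixed: "(step prog ^^ s) c = c" if "halted prog c" for s c
    using that by (induction s) (auto simp: step_def halted_def)
  have "run prog b m = (step prog ^^ ((b - t) + t)) (0, m)"
    unfolding run_def using t(1) by simp
  also have "\<dots> = (step prog ^^ (b - t)) ((step prog ^^ t) (0, m))"
    by (simp add: funpow_add)
  also have "\<dots> = (step prog ^^ t) (0, m)"
    using t(2) by (intro fixed) (simp add: halted_def)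
  finally show ?thesis
    using t(2,3) by (simp add: halted_def)
qed

definition copy_loop :: "nat \<Rightarrow> nat \<Rightarrow> nat \<Rightarrow> nat \<Rightarrow> nat \<Rightarrow> instr list" where
  "copy_loop L cnt src dst tmp =
     [Jz cnt (L + 8), Load tmp src, Store dst tmp, Const tmp 1,
      Add dst dst tmp, Add src src tmp, Sub cnt cnt tmp, Jmp L]"

lemma code_at_nth:
  assumes "take (length code) (drop L prog) = code" and "i < length code"
  shows "L + i < length prog \<and> prog ! (L + i) = code ! i"
proof -
  have "length code = min (length code) (length prog - L)"
    using arg_cong[OF assms(1), of length] by simp
  then have "i < length prog - L"
    using assms(2) by linarith
  then have "L + i < length prog"
    by linarith
  moreover have "prog ! (L + i) = take (length code) (drop L prog) ! i"
    using \<open>L + i < length prog\<close> assms(2) by simp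
  ultimately show ?thesis
    using assms(1) by simp
qed

lemma copy_loop_code:
  assumes "take 8 (drop L prog) = copy_loop L cnt src dst tmp"
  shows "Suc (Suc (Suc (Suc (Suc (Suc (Suc L)))))) < length prog \<and>
    prog ! L = Jz cnt (L + 8) \<and> prog ! Suc L = Load tmp src \<and>
    prog ! Suc (Suc L) = Store dst tmp \<and> prog ! Suc (Suc (Suc L)) = Const tmp 1 \<and>
    prog ! Suc (Suc (Suc (Suc L))) = Add dst dst tmp \<and>
    prog ! Suc (Suc (Suc (Suc (Suc L)))) = Add src src tmp \<and>
    prog ! Suc (Suc (Suc (Suc (Suc (Suc L))))) = Sub cnt cnt tmp \<and>
    prog ! Suc (Suc (Suc (Suc (Suc (Suc (Suc L)))))) = Jmp L"
proof -
  have "length (copy_loop L cnt src dst tmp) = 8"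
    by (simp add: copy_loop_def)
  note instr = code_at_nth[of "copy_loop L cnt src dst tmp" L prog, unfolded this, OF assms]
  show ?thesis
    using instr[of 0] instr[of "Suc 0"] instr[of "Suc (Suc 0)"] instr[of "Suc (Suc (Suc 0))"]
      instr[of "Suc (Suc (Suc (Suc 0)))"] instr[of "Suc (Suc (Suc (Suc (Suc 0))))"]
      instr[of "Suc (Suc (Suc (Suc (Suc (Suc 0)))))"]
      instr[of "Suc (Suc (Suc (Suc (Suc (Suc (Suc 0))))))"]
    by (simp add: copy_loop_def)
qed

lemma copy_loop_reaches:
  assumes code: "take 8 (drop L prog) = copy_loop L cnt src dst tmp"
    and regs: "distinct [cnt, src, dst, tmp]"
    and "m cnt = c" and "m dst = D" and "m src = S"
    and "\<forall>i<c. D + i \<notin> {cnt, src, dst, tmp} \<and> S + i \<notin> {cnt, src, dst, tmp}"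
    and "\<forall>i<c. \<forall>j<c. D + i \<noteq> S + j"
  shows "reaches prog L m (L + 8) (\<lambda>m'. (\<forall>i<c. m' (D + i) = m (S + i)) \<and>
       (\<forall>a. a \<notin> {cnt, src, dst, tmp} \<and> (\<forall>i<c. a \<noteq> D + i) \<longrightarrow> m' a = m a)) (8 * c + 1)"
  using assms(3-7)
proof (induction c arbitrary: m D S)
  case 0
  have "(step prog ^^ 1) (L, m) = (L + 8, m)"
    using copy_loop_code[OF code] \<open>m cnt = 0\<close> by (simp add: step_def copy_loop_def)
  then show ?case
    by (rule reaches_within) auto
next
  case (Suc c)
  define m1 where "m1 = m(tmp := m S, D := m S, tmp := 1, dst := Suc D, src := Suc S, cnt := c)"
  have D_free: "D \<notin> {cnt, src, dst, tmp}" and S_free: "S \<notin> {cnt, src, dst, tmp}"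
    using Suc.prems(4) by auto
  have neq: "cnt \<noteq> src" "cnt \<noteq> dst" "cnt \<noteq> tmp" "src \<noteq> dst" "src \<noteq> tmp" "dst \<noteq> tmp"
    "D \<noteq> cnt" "D \<noteq> src" "D \<noteq> dst" "D \<noteq> tmp" "S \<noteq> tmp"
    using regs D_free S_free by auto
  have "(step prog ^^ 8) (L, m) = (L, m1)"
    using copy_loop_code[OF code] Suc.prems(1-3) neq neq[symmetric]
    unfolding m1_def by (simp add: step_def funpow_numeral_apply)
  moreover have "reaches prog L m1 (L + 8) (\<lambda>m'. (\<forall>i<c. m' (Suc D + i) = m1 (Suc S + i)) \<and>
       (\<forall>a. a \<notin> {cnt, src, dst, tmp} \<and> (\<forall>i<c. a \<noteq> Suc D + i) \<longrightarrow> m' a = m1 a)) (8 * c + 1)"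
  proof (rule Suc.IH)
    show "m1 cnt = c" "m1 dst = Suc D" "m1 src = Suc S"
      unfolding m1_def using regs by simp_all
    show "\<forall>i<c. Suc D + i \<notin> {cnt, src, dst, tmp} \<and> Suc S + i \<notin> {cnt, src, dst, tmp}"
    proof (intro allI impI)
      fix i
      assume "i < c"
      then show "Suc D + i \<notin> {cnt, src, dst, tmp} \<and> Suc S + i \<notin> {cnt, src, dst, tmp}"
        using Suc.prems(4)[rule_format, of "Suc i"] by simp
    qed
    show "\<forall>i<c. \<forall>j<c. Suc D + i \<noteq> Suc S + j"
    proof (intro allI impI)
      fix i j
      assume "i < c" "j < c"
      then show "Suc D + i \<noteq> Suc S + j"
        using Suc.prems(5)[rule_format, of "Suc i" "Suc j"] by simp
    qed
  qed
  ultimately have "reaches prog L m (L + 8) (\<lambda>m'. (\<forall>i<c. m' (Suc D + i) = m1 (Suc S + i)) \<and>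
       (\<forall>a. a \<notin> {cnt, src, dst, tmp} \<and> (\<forall>i<c. a \<noteq> Suc D + i) \<longrightarrow> m' a = m1 a)) (8 + (8 * c + 1))"
    by (rule reaches_after)
  then show ?case
  proof (rule reaches_mono)
    fix m'
    assume m': "(\<forall>i<c. m' (Suc D + i) = m1 (Suc S + i)) \<and>
       (\<forall>a. a \<notin> {cnt, src, dst, tmp} \<and> (\<forall>i<c. a \<noteq> Suc D + i) \<longrightarrow> m' a = m1 a)"
    have m1_S: "m1 (S + i) = m (S + i)" if "i < Suc c" for i
    proof -
      have "S + i \<noteq> D"
        using Suc.prems(5)[rule_format, of 0 i] that by simp
      then show ?thesis
        unfolding m1_def using Suc.prems(4) that by simp
    qed
    have "m' (D + i) = m (S + i)" if "i < Suc c" for i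
    proof (cases i)
      case 0
      have "m' D = m1 D"
        using m' D_free by auto
      then show ?thesis
        using 0 D_free unfolding m1_def by simp
    next
      case (Suc i')
      then show ?thesis
        using m' m1_S[OF that] that by auto
    qed
    moreover have "m' a = m a" if "a \<notin> {cnt, src, dst, tmp}" "\<forall>i<Suc c. a \<noteq> D + i" for a
    proof -
      have "\<forall>i<c. a \<noteq> Suc D + i"
        using that(2) by auto
      then have "m' a = m1 a"
        using m' that(1) by blast
      moreover have "a \<noteq> D"
        using that(2)[rule_format, of 0] by simp
      ultimately show ?thesis
        unfolding m1_def using that(1) by simp
    qed
    ultimately show "(\<forall>i<Suc c. m' (D + i) = m (S + i)) \<and>
       (\<forall>a. a \<notin> {cnt, src, dst, tmp} \<and> (\<forall>i<Suc c. a \<noteq> D + i) \<longrightarrow> m' a = m a)"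
      by blast
  qed simp
qed

section \<open>The hardening program\<close>

text \<open>The instance occupies cells 0 to 2n+1 (see encode_input). As instructions address the
  registers 0 to 15 directly, the program first moves cells 2 to 2n+1 to address k + 16n + 14,
  computed by repeated addition. From then on the registers hold n (0), the constant 1 (2),
  k (3) and the bases of the parent codes (4), of the initial flags (5), of the weights, that is
  the tree sizes (6), and of the chosen flags (7), while 8 to 15 are scratch. The phases are:
  relocation (pc 0 to 95); for each entity, climbing to its root and incrementing the root's
  weight (96 to 118); k rounds of choosing and clearing a largest weight (119 to 143); copying
  the chosen flags to the output cells (144 to 158).\<close>

definition hardening_program :: "instr list" where
  "hardening_program =
     [Add 1 1 0, Add 1 1 0, Add 1 1 0, Add 1 1 0, Add 1 1 0, Add 1 1 0, Add 1 1 0, Add 1 1 0,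
      Add 1 1 0, Add 1 1 0, Add 1 1 0, Add 1 1 0, Add 1 1 0, Add 1 1 0, Add 1 1 0, Add 1 1 0] @
     [Store 1 2, Const 2 1] @ concat (map (\<lambda>r. [Add 1 1 2, Store 1 r]) [3..<16]) @ [Add 1 1 2] @
     [Sub 3 1 0, Sub 3 3 0, Sub 3 3 0, Sub 3 3 0, Sub 3 3 0, Sub 3 3 0, Sub 3 3 0, Sub 3 3 0,
      Sub 3 3 0, Sub 3 3 0, Sub 3 3 0, Sub 3 3 0, Sub 3 3 0, Sub 3 3 0, Sub 3 3 0, Sub 3 3 0] @
     [Const 11 14, Sub 3 3 11, Const 4 0, Add 4 4 1, Add 8 4 11, Const 9 16, Add 10 0 0, Sub 10 10 11] @
     copy_loop 69 10 9 8 11 @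
     [Const 8 0, Add 8 8 4, Const 11 14, Sub 9 4 11, Const 10 14] @
     copy_loop 82 10 9 8 11 @
     [Add 5 4 0, Add 6 5 0, Const 11 14, Add 6 6 11, Add 7 6 0, Const 8 0,
      Const 9 0, Add 9 9 8, Const 10 0, Add 10 10 0,
      Add 12 5 9, Load 11 12, Jz 11 104, Jmp 111,
      Jz 10 115, Add 12 4 9, Load 11 12, Jz 11 115, Sub 9 11 2, Sub 10 10 2, Jmp 100,
      Add 12 6 9, Load 11 12, Add 11 11 2, Store 12 11,
      Add 8 8 2, Sub 11 0 8, Jz 11 119, Jmp 96,
      Const 8 0, Add 8 8 3,
      Jz 8 144, Const 13 0, Const 14 0, Const 15 0,
      Add 12 6 15, Load 11 12, Sub 10 11 14, Jz 10 133,
      Const 13 0, Add 13 13 15, Const 14 0, Add 14 14 11,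
      Add 15 15 2, Sub 10 0 15, Jz 10 137, Jmp 125,
      Add 12 6 13, Const 11 0, Store 12 11, Add 12 7 13, Store 12 2, Sub 8 8 2, Jmp 121,
      Const 3 0, Add 3 3 0, Const 1 0, Add 1 1 7, Add 0 0 0, Const 2 2, Add 0 0 2] @
     copy_loop 151 3 1 0 2"

lemmas program_code = hardening_program_def copy_loop_def

lemma length_hardening_program [simp]: "length hardening_program = 159"
  by (simp add: program_code)

locale hardening_instance = case_I_system "{0..<n}" idr E' for n :: nat and idr E' +
  fixes k :: nat
  assumes k_less_card: "k < card E'"
begin

lemma card_initial_le: "card E' \<le> n"
  using card_mono[OF _ initial_subset] by simp

lemma n_pos: "0 < n"
  using k_less_card card_initial_le by simp

lemma k_less_n: "k < n"
  using k_less_card card_initial_le by simp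

abbreviation input :: "nat \<Rightarrow> nat" where
  "input \<equiv> encode_input n idr E' k"

definition parent_code :: "nat \<Rightarrow> nat" where
  "parent_code y = (case parent y of None \<Rightarrow> 0 | Some j \<Rightarrow> Suc j)"

definition initial_flag :: "nat \<Rightarrow> nat" where
  "initial_flag y = (if y \<in> E' then 1 else 0)"

lemma input_0: "input 0 = n" and input_1: "input 1 = k"
  unfolding encode_input_def by simp_all

lemma input_parent: "y < n \<Longrightarrow> input (2 + y) = parent_code y"
  unfolding encode_input_def parent_code_def parent_def by (simp add: Let_def)

lemma input_flag: "y < n \<Longrightarrow> input (2 + n + y) = initial_flag y"
  unfolding encode_input_def initial_flag_def by (simp add: Let_def)

lemma input_beyond: "2 + 2 * n \<le> a \<Longrightarrow> input a = 0"
  unfolding encode_input_def by simp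

lemma parent_code_pos: "parent_code y \<noteq> 0 \<Longrightarrow> parent y = Some (parent_code y - 1)"
  unfolding parent_code_def by (auto split: option.splits)

lemma parent_code_less: "parent_code y \<noteq> 0 \<Longrightarrow> parent_code y - 1 < n"
  using parent_code_pos parent_in_E by fastforce

definition weight :: "nat \<Rightarrow> nat" where
  "weight y = card (root_tree y)"

lemma weight_pos: "y \<in> E' \<Longrightarrow> 0 < weight y"
  unfolding weight_def using root_self finite_root_tree by (auto simp: root_tree_def card_gt_0_iff)

lemma weight_zero: "y \<notin> E' \<Longrightarrow> weight y = 0"
proof -
  assume "y \<notin> E'"
  then have "root_tree y = {}"
    unfolding root_tree_def using root_of_in_initial by blast
  then show ?thesis
    unfolding weight_def by simp
qed

definition save_base :: nat where "save_base = k + 16 * n"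
definition array_base :: nat where "array_base = k + 16 * n + 14"
definition weight_base :: nat where "weight_base = k + 18 * n + 28"
definition chosen_base :: nat where "chosen_base = k + 19 * n + 28"

lemma multiply_by_addition:
  "(step hardening_program ^^ 16) (0, m) = (16, m(1 := m 1 + 16 * m 0))"
  by (simp add: step_def program_code funpow_numeral_apply) (rule ext, simp)

definition saved :: "(nat \<Rightarrow> nat) \<Rightarrow> nat \<Rightarrow> nat \<Rightarrow> nat" where
  "saved m D = m(D := m 2, 2 := 1, 1 := D+1, D+1 := m 3, 1 := D+2, D+2 := m 4,
     1 := D+3, D+3 := m 5, 1 := D+4, D+4 := m 6, 1 := D+5, D+5 := m 7, 1 := D+6, D+6 := m 8,
     1 := D+7, D+7 := m 9, 1 := D+8, D+8 := m 10, 1 := D+9, D+9 := m 11, 1 := D+10, D+10 := m 12,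
     1 := D+11, D+11 := m 13, 1 := D+12, D+12 := m 14, 1 := D+13, D+13 := m 15, 1 := D + 14)"

lemma save_registers:
  assumes "m 1 = D + 16"
  shows "(step hardening_program ^^ 29) (16, m) = (45, saved m (D + 16))"
  using assms unfolding saved_def by (simp add: step_def program_code funpow_numeral_apply)

lemma recover_k:
  "(step hardening_program ^^ 20) (45, m) = (65, m(3 := m 1 - 16 * m 0 - 14, 11 := 14, 4 := m 1))"
  by (simp add: step_def program_code funpow_numeral_apply) (rule ext, simp)

lemma saved_registers:
  "saved m (D + 16) 0 = m 0" "saved m (D + 16) 1 = D + 30" "saved m (D + 16) 2 = 1"
  unfolding saved_def by simp_all

lemma saved_copy: "j < 14 \<Longrightarrow> saved m (D + 16) (D + 16 + j) = m (2 + j)"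
proof -
  assume "j < 14"
  then have "j = 0 \<or> j = 1 \<or> j = 2 \<or> j = 3 \<or> j = 4 \<or> j = 5 \<or> j = 6 \<or> j = 7 \<or>
    j = 8 \<or> j = 9 \<or> j = 10 \<or> j = 11 \<or> j = 12 \<or> j = 13"
    by presburger
  then show ?thesis
    unfolding saved_def by (elim disjE) simp_all
qed

lemma saved_other: "16 \<le> a \<Longrightarrow> \<not> (D + 16 \<le> a \<and> a < D + 30) \<Longrightarrow> saved m (D + 16) a = m a"
  unfolding saved_def by auto

lemma program_copy_loops:
  "take 8 (drop 69 hardening_program) = copy_loop 69 10 9 8 11"
  "take 8 (drop 82 hardening_program) = copy_loop 82 10 9 8 11"
  "take 8 (drop 151 hardening_program) = copy_loop 151 3 1 0 2"
  by (simp_all add: program_code)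

definition layout_ok :: "(nat \<Rightarrow> nat) \<Rightarrow> bool" where
  "layout_ok m \<longleftrightarrow> m 0 = n \<and> m 2 = 1 \<and> m 3 = k \<and> m 4 = array_base \<and> m 5 = array_base + n \<and>
     m 6 = weight_base \<and> m 7 = chosen_base \<and>
     (\<forall>y<n. m (array_base + y) = parent_code y \<and> m (array_base + n + y) = initial_flag y)"

definition half_relocated :: "(nat \<Rightarrow> nat) \<Rightarrow> bool" where
  "half_relocated m \<longleftrightarrow> m 0 = n \<and> m 2 = 1 \<and> m 3 = k \<and> m 4 = array_base \<and>
     (\<forall>j<14. m (save_base + j) = input (2 + j)) \<and>
     (\<forall>j. 14 \<le> j \<and> j < 2 * n \<longrightarrow> m (array_base + j) = input (2 + j)) \<and>
     (\<forall>a\<ge>weight_base. m a = 0)"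

lemma array_base_eq: "array_base = save_base + 14"
  unfolding array_base_def save_base_def by simp

lemma weight_base_eq: "weight_base = array_base + 2 * n + 14"
  unfolding array_base_def weight_base_def by simp

lemma chosen_base_eq: "chosen_base = weight_base + n"
  unfolding chosen_base_def weight_base_def by simp

lemma save_base_ge: "16 \<le> save_base"
  unfolding save_base_def using n_pos by simp

lemma finish_relocation:
  assumes "half_relocated m"
  shows "reaches hardening_program 77 m 96
    (\<lambda>m'. layout_ok m' \<and> m' 8 = 0 \<and> (\<forall>a\<ge>weight_base. m' a = 0)) (5 + (8 * 14 + 1 + 6))"
proof -
  obtain D where D: "save_base = D + 16"
    using save_base_ge by (metis le_add_diff_inverse2)
  have B: "array_base = D + 30"
    using D array_base_eq by simp
  have W: "weight_base = D + 30 + 2 * n + 14"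
    using B weight_base_eq by simp
  have start: "m 0 = n" "m 2 = 1" "m 3 = k" "m 4 = D + 30"
    "\<forall>j<14. m (D + 16 + j) = input (2 + j)"
    "\<forall>j. 14 \<le> j \<and> j < 2 * n \<longrightarrow> m (D + 30 + j) = input (2 + j)"
    "\<forall>a\<ge>D + 30 + 2 * n + 14. m a = 0"
    using assms unfolding half_relocated_def D B W by auto
  define m1 where "m1 = m(8 := D + 30, 11 := 14, 9 := D + 16, 10 := 14)"
  have prepare: "(step hardening_program ^^ 5) (77, m) = (82, m1)"
    unfolding m1_def using start(4)
    by (simp add: step_def program_code funpow_numeral_apply) (simp add: add.commute)
  have loop: "reaches hardening_program 82 m1 (82 + 8)
    (\<lambda>m'. (\<forall>i<14. m' (D + 30 + i) = m1 (D + 16 + i)) \<and>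
       (\<forall>a. a \<notin> {10, 9, 8, 11} \<and> (\<forall>i<14. a \<noteq> D + 30 + i) \<longrightarrow> m' a = m1 a)) (8 * 14 + 1)"
    by (rule copy_loop_reaches[OF program_copy_loops(2)]) (auto simp: m1_def)
  have "reaches hardening_program 82 m1 96
    (\<lambda>m'. layout_ok m' \<and> m' 8 = 0 \<and> (\<forall>a\<ge>weight_base. m' a = 0)) (8 * 14 + 1 + 6)"
  proof (rule reaches_trans[OF loop])
    fix m2
    assume copied: "(\<forall>i<14. m2 (D + 30 + i) = m1 (D + 16 + i)) \<and>
       (\<forall>a. a \<notin> {10, 9, 8, 11} \<and> (\<forall>i<14. a \<noteq> D + 30 + i) \<longrightarrow> m2 a = m1 a)"
    have regs: "m2 0 = n" "m2 2 = 1" "m2 3 = k" "m2 4 = D + 30"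
      using copied start unfolding m1_def by (auto simp: add.commute)
    have arrays: "m2 (D + 30 + j) = input (2 + j)" if "j < 2 * n" for j
    proof (cases "j < 14")
      case True
      then have "m2 (D + 30 + j) = m1 (D + 16 + j)"
        using copied by auto
      then show ?thesis
        using start(5) True unfolding m1_def by simp
    next
      case False
      then have "m2 (D + 30 + j) = m1 (D + 30 + j)"
        using copied by auto
      then show ?thesis
        using start(6) False that unfolding m1_def by simp
    qed
    have zeros: "m2 a = 0" if "D + 30 + 2 * n + 14 \<le> a" for a
    proof -
      have "m2 a = m1 a"
        using copied that by auto
      then show ?thesis
        using start(7) that unfolding m1_def by simp
    qed
    define m3 where "m3 = m2(5 := D + 30 + n, 6 := D + 30 + n + n, 11 := 14,
      6 := D + 30 + n + n + 14, 7 := D + 30 + n + n + 14 + n, 8 := 0)"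
    have "(step hardening_program ^^ 6) (82 + 8, m2) = (96, m3)"
      unfolding m3_def using regs by (simp add: step_def program_code funpow_numeral_apply)
    moreover have "layout_ok m3"
      unfolding layout_ok_def
    proof (intro conjI allI impI)
      show "m3 0 = n" "m3 2 = 1" "m3 3 = k" "m3 4 = array_base" "m3 5 = array_base + n"
        "m3 6 = weight_base" "m3 7 = chosen_base"
        unfolding m3_def using regs B W chosen_base_eq by simp_all
    next
      fix y
      assume "y < n"
      then show "m3 (array_base + y) = parent_code y" "m3 (array_base + n + y) = initial_flag y"
        using arrays[of y] arrays[of "n + y"] input_parent input_flag
        unfolding m3_def B by (simp_all add: add.assoc)
    qed
    moreover have "m3 8 = 0" "\<forall>a\<ge>weight_base. m3 a = 0"
      unfolding m3_def W using zeros by auto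
    ultimately show "reaches hardening_program (82 + 8) m2 96
      (\<lambda>m'. layout_ok m' \<and> m' 8 = 0 \<and> (\<forall>a\<ge>weight_base. m' a = 0)) 6"
      by (intro reaches_within[of 6]) auto
  qed
  then show ?thesis
    by (rule reaches_after[OF prepare])
qed

lemma start_relocation:
  "reaches hardening_program 0 input 77 half_relocated (16 + (29 + (20 + (4 + (8 * (n + n - 14) + 1)))))"
proof -
  obtain n' where n': "n = Suc n'"
    using n_pos by (cases n) auto
  define D where "D = k + 16 * n'"
  have bases: "save_base = D + 16" "array_base = D + 30" "weight_base = D + 30 + 2 * n + 14"
    unfolding save_base_def array_base_def weight_base_def D_def using n' by simp_all
  define m1 where "m1 = input(1 := k + 16 * n)"
  have multiply: "(step hardening_program ^^ 16) (0, input) = (16, m1)"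
    using multiply_by_addition[of input] input_0 input_1 unfolding m1_def by simp
  have "m1 1 = D + 16"
    unfolding m1_def D_def n' by simp
  then have save: "(step hardening_program ^^ 29) (16, m1) = (45, saved m1 (D + 16))"
    by (rule save_registers)
  define m2 where "m2 = saved m1 (D + 16)"
  have m2_regs: "m2 0 = n" "m2 1 = D + 30" "m2 2 = 1"
    unfolding m2_def saved_registers m1_def using input_0 by simp_all
  define m3 where "m3 = m2(3 := k, 11 := 14, 4 := D + 30)"
  have recover: "(step hardening_program ^^ 20) (45, m2) = (65, m3)"
    unfolding m3_def using recover_k[of m2] m2_regs unfolding D_def n' by simp
  define m4 where "m4 = m3(8 := D + 44, 9 := 16, 10 := n + n - 14)"
  have prepare: "(step hardening_program ^^ 4) (65, m3) = (69, m4)"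
    unfolding m4_def m3_def using m2_regs
    by (simp add: step_def program_code funpow_numeral_apply) (simp add: add.commute)
  have loop: "reaches hardening_program 69 m4 (69 + 8)
    (\<lambda>m'. (\<forall>i<n + n - 14. m' (D + 44 + i) = m4 (16 + i)) \<and>
       (\<forall>a. a \<notin> {10, 9, 8, 11} \<and> (\<forall>i<n + n - 14. a \<noteq> D + 44 + i) \<longrightarrow> m' a = m4 a))
    (8 * (n + n - 14) + 1)"
  proof (rule copy_loop_reaches[OF program_copy_loops(1)])
    show "\<forall>i<n + n - 14. \<forall>j<n + n - 14. D + 44 + i \<noteq> 16 + j"
      unfolding D_def n' by auto
  qed (auto simp: m4_def)
  have "reaches hardening_program 69 m4 (69 + 8) half_relocated (8 * (n + n - 14) + 1)"
  proof (rule reaches_mono[OF loop order.refl])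
    fix m'
    assume copied: "(\<forall>i<n + n - 14. m' (D + 44 + i) = m4 (16 + i)) \<and>
       (\<forall>a. a \<notin> {10, 9, 8, 11} \<and> (\<forall>i<n + n - 14. a \<noteq> D + 44 + i) \<longrightarrow> m' a = m4 a)"
    have kept: "m' x = m4 x" if "x \<notin> {10, 9, 8, 11}" "x < D + 44 \<or> D + 30 + n + n \<le> x" for x
      using copied that by auto
    show "half_relocated m'"
      unfolding half_relocated_def
    proof (intro conjI allI impI)
      show "m' 0 = n" "m' 2 = 1" "m' 3 = k" "m' 4 = array_base"
        using kept[of 0] kept[of 2] kept[of 3] kept[of 4] m2_regs unfolding m4_def m3_def bases by simp_all
    next
      fix j :: nat
      assume j: "j < 14"
      have "m' (save_base + j) = m2 (D + 16 + j)"
        using kept[of "D + 16 + j"] j unfolding bases m4_def m3_def by simp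
      also have "\<dots> = input (2 + j)"
        unfolding m2_def saved_copy[OF j] m1_def by simp
      finally show "m' (save_base + j) = input (2 + j)" .
    next
      fix j :: nat
      assume j: "14 \<le> j \<and> j < 2 * n"
      then have "j - 14 < n + n - 14"
        by linarith
      then have "m' (D + 44 + (j - 14)) = m4 (16 + (j - 14))"
        using copied by blast
      moreover have "D + 44 + (j - 14) = array_base + j" "16 + (j - 14) = 2 + j"
        using j bases by simp_all
      ultimately have "m' (array_base + j) = m2 (2 + j)"
        unfolding m4_def m3_def using j by simp
      also have "\<dots> = input (2 + j)"
        unfolding m2_def using j by (subst saved_other) (auto simp: D_def n' m1_def)
      finally show "m' (array_base + j) = input (2 + j)" .
    next
      fix x :: nat
      assume x: "weight_base \<le> x"
      have "m' x = m2 x"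
        using kept[of x] x unfolding bases m4_def m3_def by simp
      also have "\<dots> = input x"
        unfolding m2_def using x bases by (subst saved_other) (auto simp: m1_def)
      also have "\<dots> = 0"
        by (rule input_beyond) (use x bases in auto)
      finally show "m' x = 0" .
    qed
  qed
  then have "reaches hardening_program 65 m3 (69 + 8) half_relocated (4 + (8 * (n + n - 14) + 1))"
    by (rule reaches_after[OF prepare])
  then have "reaches hardening_program 45 m2 (69 + 8) half_relocated
    (20 + (4 + (8 * (n + n - 14) + 1)))"
    by (rule reaches_after[OF recover])
  then have "reaches hardening_program 16 m1 (69 + 8) half_relocated
    (29 + (20 + (4 + (8 * (n + n - 14) + 1))))"
    by (rule reaches_after[OF save[folded m2_def]])
  then have "reaches hardening_program 0 input (69 + 8) half_relocated
    (16 + (29 + (20 + (4 + (8 * (n + n - 14) + 1)))))"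
    by (rule reaches_after[OF multiply])
  then show ?thesis
    by simp
qed

text \<open>Addresses written as origin + c with 16 \<le> c are visibly distinct from the registers.\<close>
definition origin :: nat where "origin = k + 16 * n - 2"

lemma array_base_origin: "array_base = origin + 16"
  unfolding array_base_def origin_def using n_pos by simp

lemma weight_base_origin: "weight_base = origin + 30 + 2 * n"
  unfolding weight_base_def origin_def using n_pos by simp

lemma chosen_base_origin: "chosen_base = origin + 30 + 3 * n"
  unfolding chosen_base_def origin_def using n_pos by simp

lemma scratch_below_bases: "a < 16 \<Longrightarrow> a < weight_base \<and> a < chosen_base"
  unfolding weight_base_origin chosen_base_origin by simp

lemma layout_ok_upd [simp]:
  assumes "8 \<le> a \<and> a < 16 \<or> weight_base \<le> a"
  shows "layout_ok (m(a := v)) = layout_ok m"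
proof -
  have "a \<notin> {0, 2, 3, 4, 5, 6, 7}" "\<forall>y<n. array_base + y \<noteq> a \<and> array_base + n + y \<noteq> a"
    using assms unfolding weight_base_origin array_base_origin by auto
  then show ?thesis
    unfolding layout_ok_def by simp
qed

lemma layout_ok_registers:
  "layout_ok m \<Longrightarrow> m 0 = n \<and> m 2 = 1 \<and> m 3 = k \<and> m 4 = origin + 16 \<and> m 5 = origin + 16 + n \<and>
     m 6 = origin + 30 + 2 * n \<and> m 7 = origin + 30 + 3 * n"
  unfolding layout_ok_def array_base_origin weight_base_origin chosen_base_origin by simp

lemma layout_ok_arrays:
  "layout_ok m \<Longrightarrow> y < n \<Longrightarrow>
    m (origin + 16 + y) = parent_code y \<and> m (origin + 16 + n + y) = initial_flag y"
  unfolding layout_ok_def array_base_origin by simp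

lemma layout_ok_frame: "layout_ok m \<Longrightarrow> (\<forall>a. a < 10 \<or> 15 < a \<longrightarrow> M a = m a) \<Longrightarrow> layout_ok M"
  unfolding layout_ok_def array_base_origin by auto

definition chosen_clear :: "(nat \<Rightarrow> nat) \<Rightarrow> bool" where
  "chosen_clear m \<longleftrightarrow> (\<forall>a\<ge>chosen_base. m a = 0)"

lemma chosen_clear_upd [simp]: "a < chosen_base \<Longrightarrow> chosen_clear (m(a := v)) = chosen_clear m"
  unfolding chosen_clear_def by auto

definition root_count :: "nat \<Rightarrow> nat \<Rightarrow> nat" where
  "root_count x y = card {x'. x' < x \<and> root_within n x' = Some y}"

definition counted :: "(nat \<Rightarrow> nat) \<Rightarrow> nat \<Rightarrow> bool" where
  "counted m x \<longleftrightarrow> (\<forall>y<n. m (weight_base + y) = root_count x y)"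

lemma counted_upd [simp]: "a < weight_base \<Longrightarrow> counted (m(a := v)) x = counted m x"
  unfolding counted_def by auto

lemma counted_upd2 [simp]: "a < weight_base \<Longrightarrow> counted (m(a := v, b := w)) x = counted (m(b := w)) x"
  unfolding counted_def by auto


lemma root_count_0: "root_count 0 y = 0"
  unfolding root_count_def by simp

lemma root_count_Suc:
  "root_count (Suc x) y = root_count x y + (if root_within n x = Some y then 1 else 0)"
proof -
  have "{x'. x' < Suc x \<and> root_within n x' = Some y} = {x'. x' < x \<and> root_within n x' = Some y} \<union>
     (if root_within n x = Some y then {x} else {})"
    by (auto simp: less_Suc_eq)
  then show ?thesis
    unfolding root_count_def by (auto simp: card_insert_if)
qed

lemma root_count_n: "root_count n y = weight y"
proof -
  have "{x'. x' < n \<and> root_within n x' = Some y} = root_tree y"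
    unfolding root_tree_def using root_of_iff_root_within root_of_in_E by auto
  then show ?thesis
    unfolding root_count_def weight_def by simp
qed

lemma counted_Some:
  "counted m x \<Longrightarrow> root_within n x = Some y \<Longrightarrow> y < n \<Longrightarrow>
    counted (m(weight_base + y := Suc (m (weight_base + y)))) (Suc x)"
  unfolding counted_def by (auto simp: root_count_Suc)

lemma counted_None: "counted m x \<Longrightarrow> root_within n x = None \<Longrightarrow> counted m (Suc x)"
  unfolding counted_def by (auto simp: root_count_Suc)

lemma increment_root_weight:
  assumes "layout_ok m" "m 8 = x" "counted m x" "chosen_clear m" "m 9 = y" "y < n" "y \<in> E'"
    and "root_within n x = Some y"
  shows "reaches hardening_program 100 m 115
     (\<lambda>m'. layout_ok m' \<and> m' 8 = x \<and> counted m' (Suc x) \<and> chosen_clear m') 8"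
proof -
  note regs = layout_ok_registers[OF assms(1)] and arrays = layout_ok_arrays[OF assms(1,6)]
  let ?w = "origin + 30 + 2 * n + y"
  let ?m = "m(12 := ?w, 11 := Suc (m ?w), ?w := Suc (m ?w))"
  have run: "(step hardening_program ^^ 8) (100, m) = (115, ?m)"
    using regs arrays assms by (simp add: step_def program_code funpow_numeral_apply initial_flag_def)
  have "layout_ok ?m \<and> ?m 8 = x \<and> counted ?m (Suc x) \<and> chosen_clear ?m"
    using assms counted_Some[OF assms(3,8,6)] by (simp add: weight_base_origin chosen_base_origin)
  then show ?thesis
    by (rule reaches_within[OF run]) simp
qed

lemma skip_rootless:
  assumes "layout_ok m" "m 8 = x" "counted m x" "chosen_clear m" "root_within n x = None"
    and run: "(step hardening_program ^^ t) (100, m) = (115, m(12 := a, 11 := 0))"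
    and "a < weight_base" and "t \<le> b"
  shows "reaches hardening_program 100 m 115
     (\<lambda>m'. layout_ok m' \<and> m' 8 = x \<and> counted m' (Suc x) \<and> chosen_clear m') b"
proof -
  have "a < chosen_base"
    using assms(7) chosen_base_eq by simp
  then have "layout_ok (m(12 := a, 11 := 0)) \<and> (m(12 := a, 11 := 0)) 8 = x \<and>
    counted (m(12 := a, 11 := 0)) (Suc x) \<and> chosen_clear (m(12 := a, 11 := 0))"
    using assms counted_None[OF assms(3,5)] scratch_below_bases[of 11] scratch_below_bases[of 12]
    by simp
  then show ?thesis
    by (rule reaches_within[OF run]) (rule assms(8))
qed

lemma climb_to_root:
  "layout_ok m \<Longrightarrow> m 8 = x \<Longrightarrow> counted m x \<Longrightarrow> chosen_clear m \<Longrightarrow> m 9 = y \<Longrightarrow> m 10 = s \<Longrightarrow>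
   y < n \<Longrightarrow> root_within s y = root_within n x \<Longrightarrow>
   reaches hardening_program 100 m 115
     (\<lambda>m'. layout_ok m' \<and> m' 8 = x \<and> counted m' (Suc x) \<and> chosen_clear m') (10 * s + 8)"
proof (induction s arbitrary: y m)
  case 0
  note regs = layout_ok_registers[OF 0(1)] and arrays = layout_ok_arrays[OF 0(1) 0(7)]
  show ?case
  proof (cases "y \<in> E'")
    case True
    then have "root_within n x = Some y"
      using 0(8) by simp
    then show ?thesis
      by (rule reaches_mono[OF increment_root_weight[OF 0(1-5,7) True]]) simp_all
  next
    case False
    then have "root_within n x = None"
      using 0(8) by simp
    moreover have "(step hardening_program ^^ 4) (100, m) = (115, m(12 := origin + 16 + n + y, 11 := 0))"
      using regs arrays False 0 by (simp add: step_def program_code funpow_numeral_apply initial_flag_def)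
    ultimately show ?thesis
      using 0 by (intro skip_rootless) (auto simp: weight_base_origin)
  qed
next
  case (Suc s)
  note regs = layout_ok_registers[OF Suc(2)] and arrays = layout_ok_arrays[OF Suc(2) Suc(8)]
  show ?case
  proof (cases "y \<in> E'")
    case True
    then have "root_within n x = Some y"
      using Suc(9) by simp
    then show ?thesis
      by (rule reaches_mono[OF increment_root_weight[OF Suc.prems(1-5,7) True]]) simp_all
  next
    case not_initial: False
    show ?thesis
    proof (cases "parent_code y = 0")
      case True
      then have "root_within n x = None"
        using Suc(9) not_initial unfolding parent_code_def by (simp split: option.splits)
      moreover have "(step hardening_program ^^ 7) (100, m) = (115, m(12 := origin + 16 + y, 11 := 0))"
        using regs arrays not_initial True Suc.prems
        by (simp add: step_def program_code funpow_numeral_apply initial_flag_def)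
      ultimately show ?thesis
        using Suc.prems by (intro skip_rootless) (auto simp: weight_base_origin)
    next
      case False
      let ?m = "m(12 := origin + 16 + y, 11 := parent_code y, 9 := parent_code y - 1, 10 := s)"
      have "(step hardening_program ^^ 10) (100, m) = (100, ?m)"
        using regs arrays not_initial False Suc.prems
        by (simp add: step_def program_code funpow_numeral_apply initial_flag_def)
      moreover have "reaches hardening_program 100 ?m 115
        (\<lambda>m'. layout_ok m' \<and> m' 8 = x \<and> counted m' (Suc x) \<and> chosen_clear m') (10 * s + 8)"
      proof (rule Suc.IH)
        show "layout_ok ?m" "counted ?m x" "chosen_clear ?m"
          using Suc.prems by (simp_all add: weight_base_origin chosen_base_origin)
        show "?m 8 = x" "?m 9 = parent_code y - 1" "?m 10 = s"
          using Suc.prems by simp_all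
        show "parent_code y - 1 < n"
          using parent_code_less[OF False] .
        show "root_within s (parent_code y - 1) = root_within n x"
          using Suc.prems(8) not_initial parent_code_pos[OF False] by simp
      qed
      ultimately show ?thesis
        using reaches_after by fastforce
    qed
  qed
qed

lemma count_roots:
  "n - x = d \<Longrightarrow> x < n \<Longrightarrow> layout_ok m \<Longrightarrow> m 8 = x \<Longrightarrow> counted m x \<Longrightarrow> chosen_clear m \<Longrightarrow>
   reaches hardening_program 96 m 119 (\<lambda>m'. layout_ok m' \<and> counted m' n \<and> chosen_clear m')
     (d * (10 * n + 16))"
proof (induction d arbitrary: x m)
  case 0
  then show ?case by simp
next
  case (Suc d)
  note regs = layout_ok_registers[OF Suc(4)]
  have start: "(step hardening_program ^^ 4) (96, m) = (100, m(9 := x, 10 := n))"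
    using regs Suc.prems by (simp add: step_def program_code funpow_numeral_apply)
  have climb: "reaches hardening_program 100 (m(9 := x, 10 := n)) 115
     (\<lambda>m'. layout_ok m' \<and> m' 8 = x \<and> counted m' (Suc x) \<and> chosen_clear m') (10 * n + 8)"
    by (rule climb_to_root[of "m(9 := x, 10 := n)"])
      (use Suc.prems scratch_below_bases[of 9] scratch_below_bases[of 10] in simp_all)
  have next_vertex: "reaches hardening_program 115 M 119
      (\<lambda>m'. layout_ok m' \<and> counted m' n \<and> chosen_clear m') (4 + d * (10 * n + 16))"
    if "layout_ok M \<and> M 8 = x \<and> counted M (Suc x) \<and> chosen_clear M" for M
  proof (cases "Suc x = n")
    case True
    have run: "(step hardening_program ^^ 3) (115, M) = (119, M(8 := Suc x, 11 := 0))"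
      using layout_ok_registers[of M] that True by (simp add: step_def program_code funpow_numeral_apply)
    have "layout_ok (M(8 := Suc x, 11 := 0)) \<and> counted (M(8 := Suc x, 11 := 0)) n \<and>
      chosen_clear (M(8 := Suc x, 11 := 0))"
      using that True scratch_below_bases[of 8] scratch_below_bases[of 11] by simp
    then show ?thesis
      by (rule reaches_within[OF run]) simp
  next
    case False
    let ?M = "M(8 := Suc x, 11 := n - Suc x)"
    have "(step hardening_program ^^ 4) (115, M) = (96, ?M)"
      using layout_ok_registers[of M] that False Suc.prems(2)
      by (simp add: step_def program_code funpow_numeral_apply)
    moreover have "reaches hardening_program 96 ?M 119
      (\<lambda>m'. layout_ok m' \<and> counted m' n \<and> chosen_clear m') (d * (10 * n + 16))"
    proof -
      have "layout_ok ?M" "?M 8 = Suc x" "counted ?M (Suc x)" "chosen_clear ?M"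
        using that scratch_below_bases[of 8] scratch_below_bases[of 11] by simp_all
      moreover have "n - Suc x = d" "Suc x < n"
        using Suc.prems(1,2) False by simp_all
      ultimately show ?thesis
        using Suc.IH by blast
    qed
    ultimately show ?thesis
      by (rule reaches_after)
  qed
  have "reaches hardening_program 100 (m(9 := x, 10 := n)) 119
    (\<lambda>m'. layout_ok m' \<and> counted m' n \<and> chosen_clear m') ((10 * n + 8) + (4 + d * (10 * n + 16)))"
    by (rule reaches_trans[OF climb next_vertex])
  then have "reaches hardening_program 96 m 119 (\<lambda>m'. layout_ok m' \<and> counted m' n \<and> chosen_clear m')
     (4 + ((10 * n + 8) + (4 + d * (10 * n + 16))))"
    by (rule reaches_after[OF start])
  then show ?case
    by (rule reaches_mono) simp_all
qed

lemma find_heaviest: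
  "n - i = d \<Longrightarrow> i < n \<Longrightarrow> m 0 = n \<Longrightarrow> m 2 = 1 \<Longrightarrow> m 6 = weight_base \<Longrightarrow> m 15 = i \<Longrightarrow>
   m 13 < n \<Longrightarrow> (\<forall>j<i. m (weight_base + j) \<le> m 14) \<Longrightarrow> (m 14 = 0 \<or> m (weight_base + m 13) = m 14) \<Longrightarrow>
   reaches hardening_program 125 m 137 (\<lambda>m'. (\<forall>a. a < 10 \<or> 15 < a \<longrightarrow> m' a = m a) \<and> m' 13 < n \<and>
      (\<forall>j<n. m (weight_base + j) \<le> m' 14) \<and> (m' 14 = 0 \<or> m (weight_base + m' 13) = m' 14)) (d * 12)"
proof (induction d arbitrary: i m)
  case 0
  then show ?case by simp
next
  case (Suc d)
  let ?v = "m (weight_base + i)"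
  define best where "best = (if ?v \<le> m 14 then m 13 else i)"
  define top where "top = (if ?v \<le> m 14 then m 14 else ?v)"
  define M where "M = m(12 := weight_base + i, 11 := ?v, 10 := ?v - m 14, 13 := best, 14 := top,
    15 := Suc i, 10 := n - Suc i)"
  have frame: "\<forall>a. a < 10 \<or> 15 < a \<longrightarrow> M a = m a"
    unfolding M_def by auto
  have M: "M 13 = best" "M 14 = top" "M 15 = Suc i" "M 0 = n" "M 2 = 1" "M 6 = weight_base"
    unfolding M_def using Suc.prems by simp_all
  have weights: "M (weight_base + j) = m (weight_base + j)" for j
    using frame unfolding weight_base_origin by simp
  have best_less: "best < n"
    unfolding best_def using Suc.prems by simp
  have top_max: "\<forall>j<Suc i. m (weight_base + j) \<le> top"
    unfolding top_def using Suc.prems(8) by (auto simp: less_Suc_eq)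
  have top_attained: "top = 0 \<or> m (weight_base + best) = top"
    unfolding top_def best_def using Suc.prems(9) by auto
  define N where "N = (if ?v \<le> m 14 then 7 else 11) + (if Suc i = n then 0 else 1::nat)"
  have run: "(step hardening_program ^^ N) (125, m) = (if Suc i = n then 137 else 125, M)"
  proof (cases "?v \<le> m 14")
    case True
    then have "best = m 13" "top = m 14" "?v - m 14 = 0"
      unfolding best_def top_def by simp_all
    then show ?thesis
      using Suc.prems True unfolding N_def M_def weight_base_origin
      by (cases "Suc i = n") (simp_all add: step_def program_code funpow_numeral_apply fun_eq_iff)
  next
    case False
    then have "best = i" "top = ?v" "?v - m 14 \<noteq> 0"
      unfolding best_def top_def by simp_all
    then show ?thesis
      using Suc.prems False unfolding N_def M_def weight_base_origin
      by (cases "Suc i = n") (simp_all add: step_def program_code funpow_numeral_apply fun_eq_iff)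
  qed
  have "N \<le> 12"
    unfolding N_def by simp
  show ?case
  proof (cases "Suc i = n")
    case True
    have "(\<forall>a. a < 10 \<or> 15 < a \<longrightarrow> M a = m a) \<and> M 13 < n \<and>
      (\<forall>j<n. m (weight_base + j) \<le> M 14) \<and> (M 14 = 0 \<or> m (weight_base + M 13) = M 14)"
      using frame M best_less top_max top_attained True by simp
    then show ?thesis
      by (rule reaches_within[OF run[unfolded if_P[OF True]]]) (use \<open>N \<le> 12\<close> in simp)
  next
    case False
    have "n - Suc i = d" "Suc i < n"
      using Suc.prems(1,2) False by simp_all
    moreover have "\<forall>j<Suc i. M (weight_base + j) \<le> M 14" "M 14 = 0 \<or> M (weight_base + M 13) = M 14"
      using top_max top_attained weights M by simp_all
    ultimately have "reaches hardening_program 125 M 137 (\<lambda>m'. (\<forall>a. a < 10 \<or> 15 < a \<longrightarrow> m' a = M a) \<and>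
      m' 13 < n \<and> (\<forall>j<n. M (weight_base + j) \<le> m' 14) \<and> (m' 14 = 0 \<or> M (weight_base + m' 13) = m' 14))
      (d * 12)"
      using Suc.IH M best_less by blast
    then have "reaches hardening_program 125 m 137 (\<lambda>m'. (\<forall>a. a < 10 \<or> 15 < a \<longrightarrow> m' a = m a) \<and>
      m' 13 < n \<and> (\<forall>j<n. m (weight_base + j) \<le> m' 14) \<and> (m' 14 = 0 \<or> m (weight_base + m' 13) = m' 14))
      (N + d * 12)"
      by (intro reaches_after[OF run[unfolded if_not_P[OF False]]]) (auto simp: weights frame elim!: reaches_mono)
    then show ?thesis
      by (rule reaches_mono) (use \<open>N \<le> 12\<close> in simp_all)
  qed
qed

text \<open>While fewer than card E' roots are chosen, some unchosen root has positive weight;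
  so a heaviest unchosen entity is a root, and adding it keeps the chosen set heaviest.\<close>
lemma heaviest_extends_greedy:
  assumes "T \<subseteq> E'" and "card T < card E'"
    and greedy: "\<forall>a\<in>T. \<forall>b<n. b \<notin> T \<longrightarrow> weight b \<le> weight a"
    and "h < n" and heaviest: "\<forall>j<n. (if j \<in> T then 0 else weight j) \<le> w"
    and attained: "w = 0 \<or> (if h \<in> T then 0 else weight h) = w"
  shows "h \<in> E' - T \<and> weight h = w \<and> (\<forall>a\<in>insert h T. \<forall>b<n. b \<notin> insert h T \<longrightarrow> weight b \<le> weight a)"
proof -
  have "\<not> E' \<subseteq> T"
    using card_mono[OF finite_initial_subset[OF assms(1)], of E'] assms(2) by linarith
  then obtain e where e: "e \<in> E'" "e \<notin> T"
    by blast
  have "e < n"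
    using e initial_subset by auto
  then have "0 < w"
    using heaviest[rule_format, OF \<open>e < n\<close>] e(2) weight_pos[OF e(1)] by simp
  then have h: "h \<notin> T" "weight h = w"
    using attained by (auto split: if_splits)
  then have "h \<in> E'"
    using \<open>0 < w\<close> weight_zero by fastforce
  moreover have "weight b \<le> weight h" if "b < n" "b \<notin> insert h T" for b
    using heaviest[rule_format, OF that(1)] that(2) h by simp
  ultimately show ?thesis
    using h greedy by auto
qed

definition selected :: "(nat \<Rightarrow> nat) \<Rightarrow> nat \<Rightarrow> nat set \<Rightarrow> bool" where
  "selected m r T \<longleftrightarrow> layout_ok m \<and> m 8 = r \<and> T \<subseteq> E' \<and> card T + r = k \<and>
     (\<forall>i<n. m (weight_base + i) = (if i \<in> T then 0 else weight i)) \<and>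
     (\<forall>i<n. m (chosen_base + i) = (if i \<in> T then 1 else 0)) \<and>
     (\<forall>a\<in>T. \<forall>b<n. b \<notin> T \<longrightarrow> weight b \<le> weight a)"

lemma start_selection:
  assumes "layout_ok m" and "counted m n" and "chosen_clear m"
  shows "reaches hardening_program 119 m 121 (\<lambda>m'. selected m' k {}) 2"
proof -
  have run: "(step hardening_program ^^ 2) (119, m) = (121, m(8 := k))"
    using layout_ok_registers[OF assms(1)] by (simp add: step_def program_code funpow_numeral_apply)
  have "selected (m(8 := k)) k {}"
    unfolding selected_def
  proof (intro conjI allI impI ballI)
    show "layout_ok (m(8 := k))"
      using assms(1) by simp
  next
    fix i
    assume "i < n"
    then show "(m(8 := k)) (weight_base + i) = (if i \<in> {} then 0 else weight i)"
      "(m(8 := k)) (chosen_base + i) = (if i \<in> {} then 1 else 0)"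
      using assms(2,3) unfolding counted_def chosen_clear_def root_count_n
      by (auto simp: weight_base_origin chosen_base_origin)
  qed auto
  then show ?thesis
    by (rule reaches_within[OF run]) simp
qed

lemma select_heaviest:
  "selected m r T \<Longrightarrow> reaches hardening_program 121 m 144 (\<lambda>m'. \<exists>T. selected m' 0 T) (r * (12 * n + 11) + 1)"
proof (induction r arbitrary: m T)
  case 0
  have "(step hardening_program ^^ 1) (121, m) = (144, m)"
    using 0 unfolding selected_def by (simp add: step_def program_code)
  then show ?case
    by (rule reaches_within) (use 0 in auto)
next
  case (Suc r)
  have inv: "layout_ok m" "m 8 = Suc r" "T \<subseteq> E'" "card T + Suc r = k"
    "\<forall>i<n. m (weight_base + i) = (if i \<in> T then 0 else weight i)"
    "\<forall>i<n. m (chosen_base + i) = (if i \<in> T then 1 else 0)"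
    "\<forall>a\<in>T. \<forall>b<n. b \<notin> T \<longrightarrow> weight b \<le> weight a"
    using Suc.prems unfolding selected_def by auto
  note regs = layout_ok_registers[OF inv(1)]
  have reset: "(step hardening_program ^^ 4) (121, m) = (125, m(13 := 0, 14 := 0, 15 := 0))"
    using inv(2) by (simp add: step_def program_code funpow_numeral_apply)
  have scan: "reaches hardening_program 125 (m(13 := 0, 14 := 0, 15 := 0)) 137
    (\<lambda>m'. (\<forall>a. a < 10 \<or> 15 < a \<longrightarrow> m' a = (m(13 := 0, 14 := 0, 15 := 0)) a) \<and> m' 13 < n \<and>
      (\<forall>j<n. (m(13 := 0, 14 := 0, 15 := 0)) (weight_base + j) \<le> m' 14) \<and>
      (m' 14 = 0 \<or> (m(13 := 0, 14 := 0, 15 := 0)) (weight_base + m' 13) = m' 14)) (n * 12)"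
    by (rule find_heaviest[where i = 0]) (use n_pos regs in \<open>auto simp: weight_base_origin\<close>)
  have mark: "reaches hardening_program 137 M 144 (\<lambda>m'. \<exists>T. selected m' 0 T) (7 + (r * (12 * n + 11) + 1))"
    if found: "(\<forall>a. a < 10 \<or> 15 < a \<longrightarrow> M a = (m(13 := 0, 14 := 0, 15 := 0)) a) \<and> M 13 < n \<and>
      (\<forall>j<n. (m(13 := 0, 14 := 0, 15 := 0)) (weight_base + j) \<le> M 14) \<and>
      (M 14 = 0 \<or> (m(13 := 0, 14 := 0, 15 := 0)) (weight_base + M 13) = M 14)" for M
  proof -
    have frame: "M a = m a" if "a < 10 \<or> 15 < a" for a
      using found that by auto
    have weights: "(m(13 := 0, 14 := 0, 15 := 0)) (weight_base + j) = (if j \<in> T then 0 else weight j)"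
      if "j < n" for j
      using inv(5) that unfolding weight_base_origin by simp
    let ?h = "M 13"
    have "?h \<in> E' - T \<and> weight ?h = M 14 \<and>
      (\<forall>a\<in>insert ?h T. \<forall>b<n. b \<notin> insert ?h T \<longrightarrow> weight b \<le> weight a)"
    proof (rule heaviest_extends_greedy[OF inv(3) _ inv(7)])
      show "card T < card E'"
        using inv(4) k_less_card by linarith
    qed (use found weights in auto)
    then have h: "?h \<in> E'" "?h \<notin> T" "?h < n"
      and greedy: "\<forall>a\<in>insert ?h T. \<forall>b<n. b \<notin> insert ?h T \<longrightarrow> weight b \<le> weight a"
      using initial_subset by auto
    have "layout_ok M"
      by (rule layout_ok_frame[OF inv(1)]) (use frame in auto)
    note regs' = layout_ok_registers[OF this]
    let ?M = "M(12 := weight_base + ?h, 11 := 0, weight_base + ?h := 0, 12 := chosen_base + ?h,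
      chosen_base + ?h := 1, 8 := r)"
    have run: "(step hardening_program ^^ 7) (137, M) = (121, ?M)"
      using regs' frame[of 8] inv(2)
      by (simp add: step_def program_code funpow_numeral_apply weight_base_origin chosen_base_origin
          fun_eq_iff)
    have "selected ?M r (insert ?h T)"
      unfolding selected_def
    proof (intro conjI ballI allI impI)
      show "layout_ok ?M"
        using \<open>layout_ok M\<close> by (simp add: weight_base_origin chosen_base_origin)
      show "?M 8 = r" "insert ?h T \<subseteq> E'"
        using h inv(3) by simp_all
      show "card (insert ?h T) + r = k"
        using inv(4) h(2) finite_initial_subset[OF inv(3)] by simp
    next
      fix i
      assume "i < n"
      then show "?M (weight_base + i) = (if i \<in> insert ?h T then 0 else weight i)"
        "?M (chosen_base + i) = (if i \<in> insert ?h T then 1 else 0)"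
        using frame[of "weight_base + i"] frame[of "chosen_base + i"] inv(5,6) h(3)
        unfolding weight_base_origin chosen_base_origin by auto
    qed (use greedy in blast)
    then have "reaches hardening_program 121 ?M 144 (\<lambda>m'. \<exists>T. selected m' 0 T) (r * (12 * n + 11) + 1)"
      by (rule Suc.IH)
    then show ?thesis
      by (rule reaches_after[OF run])
  qed
  have "reaches hardening_program 125 (m(13 := 0, 14 := 0, 15 := 0)) 144 (\<lambda>m'. \<exists>T. selected m' 0 T)
    (n * 12 + (7 + (r * (12 * n + 11) + 1)))"
    by (rule reaches_trans[OF scan mark])
  then have "reaches hardening_program 121 m 144 (\<lambda>m'. \<exists>T. selected m' 0 T)
    (4 + (n * 12 + (7 + (r * (12 * n + 11) + 1))))"
    by (rule reaches_after[OF reset])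
  then show ?case
    by (rule reaches_mono) (simp_all add: algebra_simps)
qed

lemma write_output:
  assumes "selected m 0 T"
  shows "reaches hardening_program 144 m 159 (\<lambda>m'. decode_output n m' = T) (7 + (8 * n + 1))"
proof -
  have inv: "layout_ok m" "T \<subseteq> E'" "\<forall>i<n. m (chosen_base + i) = (if i \<in> T then 1 else 0)"
    using assms unfolding selected_def by auto
  note regs = layout_ok_registers[OF inv(1)]
  let ?M = "m(3 := n, 1 := chosen_base, 2 := 2, 0 := n + n + 2)"
  have run: "(step hardening_program ^^ 7) (144, m) = (151, ?M)"
    using regs by (simp add: step_def program_code funpow_numeral_apply fun_eq_iff chosen_base_origin)
  have copy: "reaches hardening_program 151 ?M (151 + 8)
    (\<lambda>m'. (\<forall>i<n. m' (n + n + 2 + i) = ?M (chosen_base + i)) \<and>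
       (\<forall>a. a \<notin> {3, 1, 0, 2} \<and> (\<forall>i<n. a \<noteq> n + n + 2 + i) \<longrightarrow> m' a = ?M a)) (8 * n + 1)"
  proof (rule copy_loop_reaches[OF program_copy_loops(3)])
    show "\<forall>i<n. \<forall>j<n. n + n + 2 + i \<noteq> chosen_base + j"
      unfolding chosen_base_origin by auto
  qed (auto simp: chosen_base_origin)
  have "reaches hardening_program 151 ?M (151 + 8) (\<lambda>m'. decode_output n m' = T) (8 * n + 1)"
  proof (rule reaches_mono[OF copy order.refl])
    fix m'
    assume "(\<forall>i<n. m' (n + n + 2 + i) = ?M (chosen_base + i)) \<and>
       (\<forall>a. a \<notin> {3, 1, 0, 2} \<and> (\<forall>i<n. a \<noteq> n + n + 2 + i) \<longrightarrow> m' a = ?M a)"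
    then have "m' (2 + 2 * n + i) = (if i \<in> T then 1 else 0)" if "i < n" for i
      using inv(3) that unfolding chosen_base_origin by (auto simp: add.commute mult_2)
    then show "decode_output n m' = T"
      unfolding decode_output_def using inv(2) initial_subset by (auto split: if_splits)
  qed
  then show ?thesis
    by (intro reaches_after[OF run]) simp
qed

theorem hardening_program_correct:
  "reaches hardening_program 0 input 159
     (\<lambda>m. optimal_hardening {0..<n} idr E' k (decode_output n m)) (300 * (n + 1) ^ 2)"
proof -
  let ?goal = "\<lambda>m. optimal_hardening {0..<n} idr E' k (decode_output n m)"
  have emit: "reaches hardening_program 144 m 159 ?goal (7 + (8 * n + 1))"
    if selection_done: "\<exists>T. selected m 0 T" for m
  proof -
    obtain T where T: "selected m 0 T"
      using selection_done by blast
    then have T_sub: "T \<subseteq> E'" and "card T = k"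
      and greedy: "\<forall>a\<in>T. \<forall>b<n. b \<notin> T \<longrightarrow> weight b \<le> weight a"
      unfolding selected_def by auto
    have optimal: "optimal_hardening {0..<n} idr E' k T"
    proof (rule heaviest_roots_optimal[OF T_sub \<open>card T = k\<close>])
      fix a b
      assume "a \<in> T" "b \<in> E' - T"
      then show "card (root_tree b) \<le> card (root_tree a)"
        using greedy initial_subset unfolding weight_def by auto
    qed
    show ?thesis
      by (rule reaches_mono[OF write_output[OF T] order.refl]) (use optimal in simp)
  qed
  have selection: "reaches hardening_program 119 m 159 ?goal (2 + ((k * (12 * n + 11) + 1) + (7 + (8 * n + 1))))"
    if "layout_ok m \<and> counted m n \<and> chosen_clear m" for m
    using that by (intro reaches_trans[OF start_selection reaches_trans[OF select_heaviest emit]]) auto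
  have counting: "reaches hardening_program 96 m 159 ?goal
      (n * (10 * n + 16) + (2 + ((k * (12 * n + 11) + 1) + (7 + (8 * n + 1)))))"
    if "layout_ok m \<and> m 8 = 0 \<and> (\<forall>a\<ge>weight_base. m a = 0)" for m
  proof -
    have "counted m 0" "chosen_clear m"
      using that unfolding counted_def chosen_clear_def root_count_0 chosen_base_eq by auto
    then show ?thesis
      using that n_pos by (intro reaches_trans[OF count_roots selection]) auto
  qed
  have "reaches hardening_program 0 input 159 ?goal
    ((16 + (29 + (20 + (4 + (8 * (n + n - 14) + 1))))) + ((5 + (8 * 14 + 1 + 6)) +
      (n * (10 * n + 16) + (2 + ((k * (12 * n + 11) + 1) + (7 + (8 * n + 1)))))))"
    by (intro reaches_trans[OF start_relocation reaches_trans[OF finish_relocation counting]])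
  moreover have "(16 + (29 + (20 + (4 + (8 * (n + n - 14) + 1))))) + ((5 + (8 * 14 + 1 + 6)) +
      (n * (10 * n + 16) + (2 + ((k * (12 * n + 11) + 1) + (7 + (8 * n + 1)))))) \<le> 300 * (n + 1) ^ 2"
  proof -
    have "k * (12 * n + 11) \<le> n * (12 * n + 11)"
      using k_less_n by simp
    then show ?thesis
      using diff_le_self[of "n + n" 14] by (simp add: power2_eq_square algebra_simps)
  qed
  ultimately show ?thesis
    by (rule reaches_mono)
qed

end

theorem theorem2:
  "\<exists>(prog :: instr list) (c :: nat) (d :: nat).
     \<forall>(n :: nat) (idr :: nat idrs) (E' :: nat set) (k :: nat).
       wf_system {0..<n} idr \<and> restricted_case_I {0..<n} idr \<and>
       E' \<subseteq> {0..<n} \<and> k < card E' \<longrightarrow>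
       (let res = run prog (c * (n + 1) ^ d) (encode_input n idr E' k) in
          halted prog res \<and>
          optimal_hardening {0..<n} idr E' k (decode_output n (snd res)))"
proof (rule exI[of _ hardening_program], rule exI[of _ 300], rule exI[of _ 2], intro allI impI)
  fix n :: nat and idr :: "nat idrs" and E' :: "nat set" and k :: nat
  assume "wf_system {0..<n} idr \<and> restricted_case_I {0..<n} idr \<and> E' \<subseteq> {0..<n} \<and> k < card E'"
  then interpret hardening_instance n idr E' k
    by unfold_locales auto
  show "let res = run hardening_program (300 * (n + 1) ^ 2) (encode_input n idr E' k) in
      halted hardening_program res \<and> optimal_hardening {0..<n} idr E' k (decode_output n (snd res))"
    using run_when_reaches_halt[of hardening_program, unfolded length_hardening_program,
        OF hardening_program_correct]
    by (simp add: Let_def)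
qed

end
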